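(* Let $\Gamma$ be a finite undirected graph with clique number three, in which any two adjacent vertices, and any two vertices at distance two, have exactly two common neighbors. Then $G_{aut}^+(\Gamma)=G_{aut}^*(\Gamma)$.
   Context: $\Gamma=(V,E)$ is a finite simple undirected graph, $V=\{1,\dots,n\}$. The clique number is the maximal size of a set of pairwise adjacent vertices. $C(G_{aut}^+(\Gamma))$ is the universal unital $C^*$-algebra generated by $u_{ij}$, $1\le i,j\le n$, with relations: (R1) $u_{ij}=u_{ij}^*=u_{ij}^2$; (R2) $\sum_{l} u_{il}=1=\sum_{l} u_{li}$ for all $i$; (R3) $u_{ij}u_{kl}=u_{kl}u_{ij}=0$ whenever exactly one of $(i,k)\in E$, $(j,l)\in E$ holds. "$G_{aut}^+(\Gamma)=G_{aut}^*(\Gamma)$" means $u_{ij}u_{kl}=u_{kl}u_{ij}$ holds in $C(G_{aut}^+(\Gamma))$ for all $(i,k)\in E$, $(j,l)\in E$. *)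

theory Defs
  imports "HOL-Analysis.Analysis"
begin

text \<open>Unital complex C*-algebra structure on a type 'a: 'a is a real Banach algebra with
unit (norm 1 = 1), together with a complex scalar multiplication sc extending scaleR and an
involution st satisfying the C*-identity.\<close>

definition cstar_algebra ::
  "(complex \<Rightarrow> 'a::{real_normed_algebra_1,banach} \<Rightarrow> 'a) \<Rightarrow> ('a \<Rightarrow> 'a) \<Rightarrow> bool" where
  "cstar_algebra sc st \<longleftrightarrow>
     (\<forall>r x. sc (complex_of_real r) x = scaleR r x) \<and>
     (\<forall>c d x. sc (c * d) x = sc c (sc d x)) \<and>
     (\<forall>c x y. sc c (x + y) = sc c x + sc c y) \<and>
     (\<forall>c d x. sc (c + d) x = sc c x + sc d x) \<and>
     (\<forall>c x y. sc c (x * y) = sc c x * y \<and> sc c (x * y) = x * sc c y) \<and>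
     (\<forall>c x. norm (sc c x) = cmod c * norm x) \<and>
     (\<forall>x y. st (x + y) = st x + st y) \<and>
     (\<forall>c x. st (sc c x) = sc (cnj c) (st x)) \<and>
     (\<forall>x y. st (x * y) = st y * st x) \<and>
     (\<forall>x. st (st x) = x) \<and>
     (\<forall>x. norm (st x * x) = (norm x)\<^sup>2)"

definition simple_graph :: "nat \<Rightarrow> (nat \<Rightarrow> nat \<Rightarrow> bool) \<Rightarrow> bool" where
  "simple_graph n E \<longleftrightarrow>
     (\<forall>i j. E i j \<longrightarrow> i \<in> {1..n} \<and> j \<in> {1..n}) \<and>
     (\<forall>i j. E i j \<longrightarrow> E j i) \<and> (\<forall>i. \<not> E i i)"

definition is_clique :: "nat \<Rightarrow> (nat \<Rightarrow> nat \<Rightarrow> bool) \<Rightarrow> nat set \<Rightarrow> bool" where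
  "is_clique n E C \<longleftrightarrow> C \<subseteq> {1..n} \<and> (\<forall>x\<in>C. \<forall>y\<in>C. x \<noteq> y \<longrightarrow> E x y)"

definition clique_number :: "nat \<Rightarrow> (nat \<Rightarrow> nat \<Rightarrow> bool) \<Rightarrow> nat" where
  "clique_number n E = Max {card C | C. is_clique n E C}"

definition common_nbrs :: "nat \<Rightarrow> (nat \<Rightarrow> nat \<Rightarrow> bool) \<Rightarrow> nat \<Rightarrow> nat \<Rightarrow> nat set" where
  "common_nbrs n E x y = {w \<in> {1..n}. E x w \<and> E y w}"

definition dist_two :: "nat \<Rightarrow> (nat \<Rightarrow> nat \<Rightarrow> bool) \<Rightarrow> nat \<Rightarrow> nat \<Rightarrow> bool" where
  "dist_two n E x y \<longleftrightarrow> x \<noteq> y \<and> \<not> E x y \<and> common_nbrs n E x y \<noteq> {}"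

text \<open>Relations (R1)-(R3) of C(G_aut^+(Gamma)) for a family u in a C*-algebra.\<close>
definition qaut_rel ::
  "nat \<Rightarrow> (nat \<Rightarrow> nat \<Rightarrow> bool) \<Rightarrow> ('a::{real_normed_algebra_1,banach} \<Rightarrow> 'a) \<Rightarrow> (nat \<Rightarrow> nat \<Rightarrow> 'a) \<Rightarrow> bool" where
  "qaut_rel n E st u \<longleftrightarrow>
     (\<forall>i\<in>{1..n}. \<forall>j\<in>{1..n}. st (u i j) = u i j \<and> u i j * u i j = u i j) \<and>
     (\<forall>i\<in>{1..n}. (\<Sum>l\<in>{1..n}. u i l) = 1 \<and> (\<Sum>l\<in>{1..n}. u l i) = 1) \<and>
     (\<forall>i\<in>{1..n}. \<forall>j\<in>{1..n}. \<forall>k\<in>{1..n}. \<forall>l\<in>{1..n}.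
        (E i k \<noteq> E j l) \<longrightarrow> u i j * u k l = 0 \<and> u k l * u i j = 0)"

end

theory Submission
  imports Defs
begin

(* For edges i ~ k and j ~ l put P = u i j and Q = u k l. Both are self-adjoint, so PQ = QP
   follows from PQ = PQP, whose right-hand side is self-adjoint. Expanding PQ = PQ (\<Sum>t. u i t),
   the summands with t not adjacent to l vanish by (R3). For t ~ l, t \<noteq> j, K4-freeness and
   the hypotheses on common neighbours yield a vertex a ~ j, l, not adjacent to t, whose common
   neighbours with t are l and some w not adjacent to j. Inserting \<Sum>z. u z a after P and then
   expanding u z a u i t = 0 along the row of k (only the columns l and w survive) gives
   P u k l u i t + P u k w u i t = 0, and P u k w = 0 since j is not adjacent to w. *)

lemma card_2_other:
  assumes "card A = 2" "a \<in> A"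
  obtains b where "b \<noteq> a" "A = {a, b}"
proof -
  have "card (A - {a}) = 1"
    using assms by (simp add: card_ge_0_finite)
  then obtain b where "A - {a} = {b}"
    by (rule card_1_singletonE)
  with assms(2) that show thesis
    by blast
qed

lemma card_le_clique_number:
  assumes "is_clique n E C"
  shows "card C \<le> clique_number n E"
proof -
  have "{card C | C. is_clique n E C} \<subseteq> card ` Pow {1..n}"
    unfolding is_clique_def by blast
  then have "finite {card C | C. is_clique n E C}"
    by (rule finite_subset) simp
  then show ?thesis
    unfolding clique_number_def using assms by (auto intro: Max_ge)
qed

locale graph =
  fixes n :: nat and E :: "nat \<Rightarrow> nat \<Rightarrow> bool"
  assumes simple: "simple_graph n E"
begin

abbreviation V :: "nat set" where "V \<equiv> {1..n}"

lemma adj_sym: "E x y \<Longrightarrow> E y x"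
  using simple unfolding simple_graph_def by blast

lemma adj_irrefl [simp]: "\<not> E x x"
  using simple unfolding simple_graph_def by blast

lemma adj_vertex: "E x y \<Longrightarrow> x \<in> V" "E x y \<Longrightarrow> y \<in> V"
  using simple unfolding simple_graph_def by blast+

lemma mem_common_nbrs [simp]: "v \<in> common_nbrs n E x y \<longleftrightarrow> E x v \<and> E y v"
  unfolding common_nbrs_def using adj_vertex by blast

lemma K4_free_if_clique_number_le_3:
  assumes "clique_number n E \<le> 3"
    and "E a b" "E a c" "E a d" "E b c" "E b d" "E c d"
  shows False
proof -
  have "is_clique n E {a, b, c, d}"
    unfolding is_clique_def using assms(2-) adj_sym adj_vertex by blast
  moreover have "a \<noteq> b" "a \<noteq> c" "a \<noteq> d" "b \<noteq> c" "b \<noteq> d" "c \<noteq> d"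
    using assms(2-) adj_irrefl by metis+
  then have "card {a, b, c, d} = 4"
    by simp
  ultimately show False
    using card_le_clique_number assms(1) by fastforce
qed

end

locale two_common_nbrs_graph = graph +
  assumes K4_free: "E a b \<Longrightarrow> E a c \<Longrightarrow> E a d \<Longrightarrow> E b c \<Longrightarrow> E b d \<Longrightarrow> E c d \<Longrightarrow> False"
    and card_common_nbrs_adj: "E x y \<Longrightarrow> card (common_nbrs n E x y) = 2"
    and card_common_nbrs_dist_two: "dist_two n E x y \<Longrightarrow> card (common_nbrs n E x y) = 2"
begin

lemma common_nbrs_other:
  assumes "x \<noteq> y" "a \<in> common_nbrs n E x y"
  obtains b where "b \<noteq> a" "common_nbrs n E x y = {a, b}"
proof -
  have "card (common_nbrs n E x y) = 2"
  proof (cases "E x y")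
    case True
    then show ?thesis by (rule card_common_nbrs_adj)
  next
    case False
    with assms have "dist_two n E x y"
      unfolding dist_two_def by blast
    then show ?thesis by (rule card_common_nbrs_dist_two)
  qed
  then show thesis
    using assms(2) that by (rule card_2_other)
qed

lemma detour_of_triangle:
  assumes jl: "E j l" and lt: "E l t" and jt: "E j t"
  obtains a where "E j a" "E l a" "\<not> E a t" "common_nbrs n E a t = {l, j}"
proof -
  have "t \<in> common_nbrs n E j l" "j \<noteq> l"
    using jt jl lt adj_sym by auto
  then obtain a where "a \<noteq> t" and a: "common_nbrs n E j l = {t, a}"
    using common_nbrs_other by metis
  then have ja: "E j a" and la: "E l a"
    by (metis insertI1 insertI2 mem_common_nbrs singletonI)+
  have at: "\<not> E a t"
    using K4_free[of j l t a] jt jl lt ja la adj_sym by blast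
  have "l \<in> common_nbrs n E a t" "j \<in> common_nbrs n E a t" "j \<noteq> l"
    using jt jl lt ja la adj_sym by auto
  then have "common_nbrs n E a t = {l, j}"
    using common_nbrs_other[of a t l] \<open>a \<noteq> t\<close> by (metis insertE singletonD)
  with that ja la at show thesis
    by blast
qed

lemma common_nbrs_square_nonadj:
  assumes jl: "E j l" and ja: "E j a" and jl': "E j l'" and la: "E l a"
    and lt: "E l t" and tl': "E t l'" and "\<not> E a t" "\<not> E j t" "l' \<noteq> l"
  shows "\<not> E a l'"
proof
  assume al': "E a l'"
  show False
  proof (cases "E l l'")
    case True
    then show False
      using K4_free[of j l a l'] jl ja jl' la al' by blast
  next
    case False
    have "j \<in> common_nbrs n E l l'"
      using jl jl' adj_sym by auto
    then obtain b where b: "common_nbrs n E l l' = {j, b}"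
      using common_nbrs_other \<open>l' \<noteq> l\<close> by metis
    have "t \<in> common_nbrs n E l l'" "a \<in> common_nbrs n E l l'"
      using lt tl' la al' adj_sym by auto
    moreover have "t \<noteq> j" "a \<noteq> t" "a \<noteq> j"
      using ja \<open>\<not> E a t\<close> \<open>\<not> E j t\<close> adj_sym by auto
    ultimately show False
      using b by auto
  qed
qed

lemma detour_of_induced_path:
  assumes jl: "E j l" and lt: "E l t" and jt: "\<not> E j t" and "t \<noteq> j"
  obtains a w where "E j a" "E l a" "\<not> E a t" "\<not> E j w" "w \<noteq> l"
    "common_nbrs n E a t = {l, w}"
proof -
  have "l \<in> common_nbrs n E j t"
    using jl lt adj_sym by auto
  then obtain l' where "l' \<noteq> l" and l': "common_nbrs n E j t = {l, l'}"
    using common_nbrs_other \<open>t \<noteq> j\<close> by metis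
  then have jl': "E j l'" and tl': "E t l'"
    by (metis insertI1 insertI2 mem_common_nbrs singletonI)+
  obtain a where a: "a \<in> common_nbrs n E j l" "a \<noteq> l'"
    using card_common_nbrs_adj[OF jl] by (metis card_2_iff insertCI)
  then have ja: "E j a" and la: "E l a"
    by auto
  have at: "\<not> E a t"
  proof
    assume "E a t"
    then have "a \<in> common_nbrs n E j t"
      using ja adj_sym by auto
    then show False
      using l' a(2) la by auto
  qed
  have "a \<noteq> t" "l \<in> common_nbrs n E a t"
    using ja jt la lt adj_sym by auto
  then obtain w where "w \<noteq> l" and w: "common_nbrs n E a t = {l, w}"
    using common_nbrs_other by metis
  then have aw: "E a w" and tw: "E t w"
    by (metis insertI1 insertI2 mem_common_nbrs singletonI)+
  have "\<not> E j w"
  proof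
    assume "E j w"
    with tw l' \<open>w \<noteq> l\<close> have "w = l'"
      by (metis adj_sym insertE mem_common_nbrs singletonD)
    with aw common_nbrs_square_nonadj[OF jl ja jl' la lt tl' at jt \<open>l' \<noteq> l\<close>] show False
      by simp
  qed
  with that ja la at \<open>w \<noteq> l\<close> w show thesis
    by blast
qed

lemma common_nbr_detour:
  assumes "E j l" "E l t" "t \<noteq> j"
  obtains a w where "E j a" "E l a" "\<not> E a t" "\<not> E j w" "w \<noteq> l"
    "common_nbrs n E a t = {l, w}"
proof (cases "E j t")
  case True
  with assms that show thesis
    by (metis adj_irrefl detour_of_triangle)
next
  case False
  show thesis
    by (rule detour_of_induced_path[OF assms(1,2) False assms(3) that])
qed

end

locale graph_magic_unitary = graph +
  fixes u :: "nat \<Rightarrow> nat \<Rightarrow> 'a::semiring_1"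
  assumes row_sum: "i \<in> {1..n} \<Longrightarrow> (\<Sum>l\<in>{1..n}. u i l) = 1"
    and col_sum: "j \<in> {1..n} \<Longrightarrow> (\<Sum>l\<in>{1..n}. u l j) = 1"
    and orth: "\<lbrakk>a \<in> {1..n}; b \<in> {1..n}; c \<in> {1..n}; d \<in> {1..n}; E a c \<noteq> E b d\<rbrakk>
      \<Longrightarrow> u a b * u c d = 0"
begin

lemma sum_row_between:
  assumes "i \<in> V"
  shows "(\<Sum>l\<in>V. x * (u i l * y)) = x * y"
proof -
  have "(\<Sum>l\<in>V. x * (u i l * y)) = x * ((\<Sum>l\<in>V. u i l) * y)"
    by (simp add: sum_distrib_left sum_distrib_right)
  then show ?thesis
    using row_sum[OF assms] by simp
qed

lemma sum_col_between:
  assumes "j \<in> V"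
  shows "(\<Sum>l\<in>V. x * (u l j * y)) = x * y"
proof -
  have "(\<Sum>l\<in>V. x * (u l j * y)) = x * ((\<Sum>l\<in>V. u l j) * y)"
    by (simp add: sum_distrib_left sum_distrib_right)
  then show ?thesis
    using col_sum[OF assms] by simp
qed

lemma row_pair_vanishes:
  assumes zi: "E z i" and zk: "E z k" and ki: "E k i" and "\<not> E a t" "l \<noteq> w"
    and at: "common_nbrs n E a t = {l, w}"
  shows "u z a * (u k l * u i t) + u z a * (u k w * u i t) = 0"
proof -
  have "E a l" "E t l"
    using at by (metis insertI1 mem_common_nbrs)+
  then have "a \<in> V" "t \<in> V" "l \<in> V"
    using adj_vertex by blast+
  have "w \<in> V"
    using at adj_vertex by (metis insertI1 insertI2 mem_common_nbrs)
  have "u z a * (u k x * u i t) = 0" if "x \<in> V - {l, w}" for x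
  proof (cases "E a x")
    case True
    then have "\<not> E x t"
      using that at adj_sym by auto
    then have "u k x * u i t = 0"
      using orth[of k x i t] that ki \<open>t \<in> V\<close> adj_vertex by blast
    then show ?thesis by simp
  next
    case False
    then have "u z a * u k x = 0"
      using orth[of z a k x] that zk \<open>a \<in> V\<close> adj_vertex by blast
    then show ?thesis by (simp add: mult.assoc[symmetric])
  qed
  then have "u z a * (u k l * u i t) + u z a * (u k w * u i t) = (\<Sum>x\<in>V. u z a * (u k x * u i t))"
    using \<open>l \<in> V\<close> \<open>w \<in> V\<close> \<open>l \<noteq> w\<close> by (subst sum.mono_neutral_right[of V "{l, w}"]) auto
  also have "\<dots> = u z a * u i t"
    using ki adj_vertex by (blast intro: sum_row_between)
  also have "\<dots> = 0"
    using orth[of z a i t] zi \<open>\<not> E a t\<close> \<open>a \<in> V\<close> \<open>t \<in> V\<close> adj_vertex by blast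
  finally show ?thesis .
qed

lemma left_pair_vanishes:
  assumes ik: "E i k" and ja: "E j a" and la: "E l a" and "\<not> E a t" "l \<noteq> w"
    and at: "common_nbrs n E a t = {l, w}" and "z \<in> V"
  shows "u i j * (u z a * (u k l * u i t)) + u i j * (u z a * (u k w * u i t)) = 0"
proof (cases "E i z \<and> E z k")
  case True
  then show ?thesis
    using row_pair_vanishes[of z i k a t l w] assms adj_sym
    by (metis distrib_left mult_zero_right)
next
  case False
  have aw: "E a w"
    using at by (metis insertI1 insertI2 mem_common_nbrs)
  from False consider "\<not> E i z" | "\<not> E z k" by blast
  then show ?thesis
  proof cases
    case 1
    then have "u i j * u z a = 0"
      using orth[of i j z a] \<open>z \<in> V\<close> ik ja adj_vertex by blast
    then show ?thesis by (simp add: mult.assoc[symmetric])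
  next
    case 2
    then have "u z a * u k l = 0" "u z a * u k w = 0"
      using orth[of z a k l] orth[of z a k w] \<open>z \<in> V\<close> la aw ik adj_sym adj_vertex by blast+
    then show ?thesis by (simp add: mult.assoc[symmetric])
  qed
qed

lemma sandwich_term_vanishes:
  assumes ik: "E i k" and ja: "E j a" and la: "E l a" and "\<not> E a t" "\<not> E j w" "l \<noteq> w"
    and at: "common_nbrs n E a t = {l, w}"
  shows "u i j * u k l * u i t = 0"
proof -
  have "a \<in> V"
    using ja adj_vertex by blast
  have "u i j * (u k l * u i t) + u i j * (u k w * u i t)
      = (\<Sum>z\<in>V. u i j * (u z a * (u k l * u i t))) + (\<Sum>z\<in>V. u i j * (u z a * (u k w * u i t)))"
    by (simp only: sum_col_between[OF \<open>a \<in> V\<close>])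
  also have "\<dots> = 0"
    using left_pair_vanishes[OF assms(1-4,6,7)] by (simp add: sum.distrib[symmetric])
  finally have "u i j * (u k l * u i t) + u i j * (u k w * u i t) = 0" .
  moreover have "E a w"
    using at by (metis insertI1 insertI2 mem_common_nbrs)
  then have "u i j * u k w = 0"
    using orth[of i j k w] ik ja \<open>\<not> E j w\<close> adj_vertex by blast
  then have "u i j * (u k w * u i t) = 0"
    by (simp add: mult.assoc[symmetric])
  ultimately show ?thesis
    by (simp add: mult.assoc)
qed

end

locale two_common_nbrs_magic_unitary =
  two_common_nbrs_graph n E + graph_magic_unitary n E u for n E u

context two_common_nbrs_magic_unitary
begin

lemma edge_product_sandwich:
  assumes ik: "E i k" and jl: "E j l"
  shows "u i j * u k l = u i j * u k l * u i j"
proof -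
  have "u i j * u k l * u i t = 0" if "t \<in> V" "t \<noteq> j" for t
  proof (cases "E l t")
    case True
    then obtain a w where "E j a" "E l a" "\<not> E a t" "\<not> E j w" "w \<noteq> l"
      "common_nbrs n E a t = {l, w}"
      using common_nbr_detour jl \<open>t \<noteq> j\<close> by metis
    then show ?thesis
      using sandwich_term_vanishes ik by metis
  next
    case False
    then have "u k l * u i t = 0"
      using orth[of k l i t] ik jl \<open>t \<in> V\<close> adj_sym adj_vertex by blast
    then show ?thesis
      by (simp add: mult.assoc)
  qed
  then have vanish: "\<forall>t\<in>V - {j}. u i j * u k l * u i t = 0"
    by blast
  have "j \<in> V" "i \<in> V"
    using ik jl adj_vertex by blast+
  have "u i j * u k l = u i j * u k l * (\<Sum>t\<in>V. u i t)"
    by (simp only: row_sum[OF \<open>i \<in> V\<close>] mult_1_right)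
  also have "\<dots> = (\<Sum>t\<in>V. u i j * u k l * u i t)"
    by (rule sum_distrib_left)
  also have "\<dots> = u i j * u k l * u i j"
    using sum.mono_neutral_right[OF _ _ vanish] \<open>j \<in> V\<close> by simp
  finally show ?thesis .
qed

end

lemma commute_if_sandwich:
  fixes p q :: "'a::semigroup_mult"
  assumes st_mult: "\<And>x y. st (x * y) = st y * st x"
    and "st p = p" "st q = q" and pqp: "p * q = p * q * p"
  shows "p * q = q * p"
proof -
  have "q * p = st (p * q)"
    by (simp add: st_mult assms(2,3))
  also have "\<dots> = st (p * q * p)"
    by (simp only: pqp[symmetric])
  also have "\<dots> = p * q * p"
    by (simp add: st_mult assms(2,3) mult.assoc)
  finally show ?thesis
    using pqp by simp
qed

theorem lemma6p1:
  fixes n :: nat and E :: "nat \<Rightarrow> nat \<Rightarrow> bool"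
    and sc :: "complex \<Rightarrow> 'a::{real_normed_algebra_1,banach} \<Rightarrow> 'a" and st :: "'a \<Rightarrow> 'a"
    and u :: "nat \<Rightarrow> nat \<Rightarrow> 'a"
  assumes "simple_graph n E"
    and "clique_number n E = 3"
    and "\<forall>x\<in>{1..n}. \<forall>y\<in>{1..n}. E x y \<longrightarrow> card (common_nbrs n E x y) = 2"
    and "\<forall>x\<in>{1..n}. \<forall>y\<in>{1..n}. dist_two n E x y \<longrightarrow> card (common_nbrs n E x y) = 2"
    and "cstar_algebra sc st"
    and "qaut_rel n E st u"
  shows "\<forall>i\<in>{1..n}. \<forall>j\<in>{1..n}. \<forall>k\<in>{1..n}. \<forall>l\<in>{1..n}.
           E i k \<and> E j l \<longrightarrow> u i j * u k l = u k l * u i j"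
proof -
  interpret graph n E
    using assms(1) by unfold_locales
  have "dist_two n E x y \<Longrightarrow> x \<in> V \<and> y \<in> V" for x y
    unfolding dist_two_def common_nbrs_def using adj_vertex by blast
  then interpret two_common_nbrs_magic_unitary n E u
    using assms(2-4,6) K4_free_if_clique_number_le_3 adj_vertex
    unfolding qaut_rel_def by unfold_locales auto
  have st_mult: "st (x * y) = st y * st x" for x y
    using assms(5) unfolding cstar_algebra_def by blast
  have selfadjoint: "st (u i j) = u i j" if "i \<in> V" "j \<in> V" for i j
    using assms(6) that unfolding qaut_rel_def by blast
  show ?thesis
    using commute_if_sandwich[OF st_mult selfadjoint selfadjoint edge_product_sandwich]
    by blast
qed

end
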